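(* Let $n\ge 2$, $PS$ be strictly proper, and let $k$ be an integer with $1\le k\le k_B$. Let $(\bar\beta_\ell,\bar\beta_h)\in\mathbb R^2$ satisfy $\bar\beta_\ell\ge 0$, $\bar\beta_h\ge 0$ and $\bar\beta_h+\frac{P(\ell\mid h)}{P(h\mid h)}\bar\beta_\ell\le 1$. Then $u(\bar\beta_\ell,\bar\beta_h\mid h)\le u(\Sigma^*\mid h)$, with equality only when $(\bar\beta_\ell,\bar\beta_h)=(0,1)$.
   Context: Peer prediction setting with signals $\{\ell,h\}$ and a symmetric prior. $P(s\mid s')$ denotes the probability that another agent has signal $s$ given that one's own signal is $s'$, and $P_{s'}=P(\cdot\mid s')$. Standing assumptions: $P(h\mid h)>P(h\mid\ell)$, $P(h\mid\ell)>0$ and $P(\ell\mid h)>0$. $PS$ is a strictly proper scoring rule on $\{\ell,h\}$. For $\beta'\in\mathbb R$ and $(\beta_\ell,\beta_h)\in\mathbb R^2$, let $q=P(h\mid h)\beta_h+P(\ell\mid h)\beta_\ell$ and define $$f^h(\beta',(\beta_\ell,\beta_h))=\beta'\big[q\,PS(h,P_h)+(1-q)PS(\ell,P_h)\big]+(1-\beta')\big[q\,PS(h,P_\ell)+(1-q)PS(\ell,P_\ell)\big].$$ Define $$u(\bar\beta_\ell,\bar\beta_h\mid h)=\tfrac{n-k}{n-1}f^h(\bar\beta_h,(0,1))+\tfrac{k-1}{n-1}f^h(\bar\beta_h,(\bar\beta_\ell,\bar\beta_h)).$$ This is the interim utility of a signal-$h$ deviator when $k$ deviators all play $(\bar\beta_\ell,\bar\beta_h)$,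 i.e. report $h$ with probability $\bar\beta_\ell$ given signal $\ell$ and with probability $\bar\beta_h$ given signal $h$, and the remaining $n-k$ agents report truthfully. The truthful interim utility is $u(\Sigma^*\mid h)=P(h\mid h)PS(h,P_h)+P(\ell\mid h)PS(\ell,P_h)$. $k_B=\min(k_B^h,k_B^\ell,n)$, where $k_B^h=\lceil (n-1)\mathbb E_{s\sim P_\ell}[PS(s,P_\ell)-PS(s,P_h)]/(P(\ell\mid\ell)(PS(h,P_h)-PS(\ell,P_h)))\rceil$ if $PS(h,P_h)>PS(\ell,P_h)$ and $k_B^h=n$ otherwise; and $k_B^\ell=\lceil (n-1)\mathbb E_{s\sim P_h}[PS(s,P_h)-PS(s,P_\ell)]/(P(h\mid h)(PS(\ell,P_\ell)-PS(h,P_\ell)))\rceil$ if $PS(\ell,P_\ell)>PS(h,P_\ell)$ and $k_B^\ell=n$ otherwise. *)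

theory Defs
  imports Complex_Main
begin

text \<open>A distribution on {l,h} is encoded by its probability of h (a real in [0,1]).
  Parameters: phh = P(h|h), phl = P(h|l); hence P(l|h) = 1 - phh, P(l|l) = 1 - phl.
  P_h is encoded by phh, P_l by phl.\<close>

datatype signal = Lo | Hi

definition strictly_proper :: "(signal \<Rightarrow> real \<Rightarrow> real) \<Rightarrow> bool" where
  "strictly_proper PS \<longleftrightarrow>
     (\<forall>p q. 0 \<le> p \<and> p \<le> 1 \<and> 0 \<le> q \<and> q \<le> 1 \<and> q \<noteq> p \<longrightarrow>
        p * PS Hi q + (1 - p) * PS Lo q < p * PS Hi p + (1 - p) * PS Lo p)"

definition fh :: "(signal \<Rightarrow> real \<Rightarrow> real) \<Rightarrow> real \<Rightarrow> real \<Rightarrow> real \<Rightarrow> real \<Rightarrow> real \<Rightarrow> real" where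
  "fh PS phh phl b' bl bh =
     (let q = phh * bh + (1 - phh) * bl in
        b' * (q * PS Hi phh + (1 - q) * PS Lo phh)
      + (1 - b') * (q * PS Hi phl + (1 - q) * PS Lo phl))"

definition u_dev_h :: "(signal \<Rightarrow> real \<Rightarrow> real) \<Rightarrow> real \<Rightarrow> real \<Rightarrow> nat \<Rightarrow> nat \<Rightarrow> real \<Rightarrow> real \<Rightarrow> real" where
  "u_dev_h PS phh phl n k bl bh =
     real (n - k) / real (n - 1) * fh PS phh phl bh 0 1
   + real (k - 1) / real (n - 1) * fh PS phh phl bh bl bh"

definition u_truth_h :: "(signal \<Rightarrow> real \<Rightarrow> real) \<Rightarrow> real \<Rightarrow> real" where
  "u_truth_h PS phh = phh * PS Hi phh + (1 - phh) * PS Lo phh"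

definition kB_h :: "(signal \<Rightarrow> real \<Rightarrow> real) \<Rightarrow> real \<Rightarrow> real \<Rightarrow> nat \<Rightarrow> int" where
  "kB_h PS phh phl n =
     (if PS Hi phh > PS Lo phh then
        \<lceil>real (n - 1) * (phl * (PS Hi phl - PS Hi phh) + (1 - phl) * (PS Lo phl - PS Lo phh))
          / ((1 - phl) * (PS Hi phh - PS Lo phh))\<rceil>
      else int n)"

definition kB_l :: "(signal \<Rightarrow> real \<Rightarrow> real) \<Rightarrow> real \<Rightarrow> real \<Rightarrow> nat \<Rightarrow> int" where
  "kB_l PS phh phl n =
     (if PS Lo phl > PS Hi phl then
        \<lceil>real (n - 1) * (phh * (PS Hi phh - PS Hi phl) + (1 - phh) * (PS Lo phh - PS Lo phl))
          / (phh * (PS Lo phl - PS Hi phl))\<rceil>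
      else int n)"

definition kB :: "(signal \<Rightarrow> real \<Rightarrow> real) \<Rightarrow> real \<Rightarrow> real \<Rightarrow> nat \<Rightarrow> int" where
  "kB PS phh phl n = min (kB_h PS phh phl n) (min (kB_l PS phh phl n) (int n))"

end

theory Submission
  imports Defs
begin

text \<open>Write \<open>a = P(h|h)\<close>. The deviator's interim utility splits as the truthful utility minus
  \<open>(1 - \<beta>\<^sub>h) \<Delta>\<close>, where \<open>\<Delta> > 0\<close> is the loss from reporting \<open>\<ell>\<close> instead of \<open>h\<close> against a truthful
  peer, minus \<open>r d X\<close>, the effect of being scored against another deviator: \<open>r\<close> is the
  fraction of deviating peers, \<open>d = a (1 - \<beta>\<^sub>h) - (1 - a) \<beta>\<^sub>\<ell> \<ge> 0\<close> measures how much less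
  often a deviating peer reports \<open>h\<close>, and \<open>X\<close> is a mixture of the score gaps
  \<open>PS(h, P) - PS(\<ell>, P)\<close>. Strict properness makes the gap larger at \<open>P\<^sub>h\<close> than at \<open>P\<^sub>\<ell>\<close>, so \<open>X\<close>
  can only be negative through the gap at \<open>P\<^sub>\<ell>\<close>, and the bound \<open>k \<le> k\<^sub>B\<^sup>\<ell>\<close> is exactly what keeps that
  negative contribution below \<open>(1 - \<beta>\<^sub>h) \<Delta>\<close>.\<close>

definition expected_score :: "(signal \<Rightarrow> real \<Rightarrow> real) \<Rightarrow> real \<Rightarrow> real \<Rightarrow> real" where
  "expected_score PS p q = p * PS Hi q + (1 - p) * PS Lo q"

definition score_gap :: "(signal \<Rightarrow> real \<Rightarrow> real) \<Rightarrow> real \<Rightarrow> real" where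
  "score_gap PS q = PS Hi q - PS Lo q"

lemma expected_score_eq: "expected_score PS p q = PS Lo q + p * score_gap PS q"
  unfolding expected_score_def score_gap_def by (simp add: algebra_simps)

lemma strictly_properD:
  assumes "strictly_proper PS" "0 \<le> p" "p \<le> 1" "0 \<le> q" "q \<le> 1" "q \<noteq> p"
  shows "expected_score PS p q < expected_score PS p p"
  using assms unfolding strictly_proper_def expected_score_def by blast

lemma strictly_proper_score_gap_less:
  assumes "strictly_proper PS" "0 \<le> q" "q < p" "p \<le> 1"
  shows "score_gap PS q < score_gap PS p"
proof -
  have "expected_score PS p q < expected_score PS p p"
    and "expected_score PS q p < expected_score PS q q"
    using assms by (auto intro: strictly_properD)
  then have "(p - q) * (score_gap PS q - score_gap PS p) < 0"
    by (simp add: expected_score_eq algebra_simps)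
  with \<open>q < p\<close> show ?thesis
    by (simp add: mult_less_0_iff)
qed

lemma u_dev_h_eq:
  assumes "1 \<le> k" "k \<le> n" "2 \<le> n"
  shows "u_dev_h PS phh phl n k bl bh = u_truth_h PS phh
    - (1 - bh) * (expected_score PS phh phh - expected_score PS phh phl)
    - (real k - 1) / (real n - 1) * (phh * (1 - bh) - (1 - phh) * bl)
        * (bh * score_gap PS phh + (1 - bh) * score_gap PS phl)"
proof -
  define r where "r = (real k - 1) / (real n - 1)"
  have truthful: "real (n - k) / real (n - 1) = 1 - r"
    using assms unfolding r_def by (simp add: of_nat_diff field_simps)
  have deviating: "real (k - 1) / real (n - 1) = r"
    using assms unfolding r_def by (simp add: of_nat_diff)
  show ?thesis
    unfolding u_dev_h_def truthful deviating
    unfolding u_truth_h_def fh_def Let_def expected_score_def score_gap_def r_def [symmetric]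
    by (simp add: algebra_simps)
qed

lemma kB_l_bound:
  assumes "int k \<le> kB_l PS phh phl n" "PS Hi phl < PS Lo phl" "0 < phh" "2 \<le> n"
  shows "(real k - 1) / (real n - 1) * phh * (- score_gap PS phl)
    < expected_score PS phh phh - expected_score PS phh phl"
proof -
  let ?\<Delta> = "expected_score PS phh phh - expected_score PS phh phl"
  have gap: "0 < phh * (PS Lo phl - PS Hi phl)"
    using assms by simp
  have "int k \<le> \<lceil>real (n - 1) * ?\<Delta> / (phh * (PS Lo phl - PS Hi phl))\<rceil>"
    using assms unfolding kB_l_def expected_score_def by (simp add: algebra_simps)
  then have "(real k - 1) * (phh * (PS Lo phl - PS Hi phl)) < real (n - 1) * ?\<Delta>"
    using gap by (simp add: le_ceiling_iff pos_less_divide_eq)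
  with \<open>2 \<le> n\<close> show ?thesis
    by (simp add: score_gap_def of_nat_diff field_simps)
qed

lemma deviation_slack_nonneg:
  fixes a bl bh :: real
  assumes "0 < a" "bh + (1 - a) / a * bl \<le> 1"
  shows "0 \<le> a * (1 - bh) - (1 - a) * bl"
proof -
  have "a * (bh + (1 - a) / a * bl) \<le> a"
    using mult_left_mono [OF assms(2)] \<open>0 < a\<close> by simp
  moreover have "a * (bh + (1 - a) / a * bl) = a * bh + (1 - a) * bl"
    using \<open>0 < a\<close> by (simp add: field_simps)
  ultimately show ?thesis
    by (simp add: algebra_simps)
qed

lemma feasible_deviation_cases:
  fixes a bl bh :: real
  assumes "0 < a" "a < 1" "0 \<le> bl" "0 \<le> a * (1 - bh) - (1 - a) * bl"
  obtains "bh < 1" | "bl = 0" "bh = 1"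
proof -
  have "0 \<le> (1 - a) * bl"
    using assms(2,3) by simp
  then have "0 \<le> a * (1 - bh)"
    using assms(4) by linarith
  then have "bh \<le> 1"
    using \<open>0 < a\<close> by (simp add: zero_le_mult_iff)
  moreover have "bl = 0" if "bh = 1"
    using assms(2-4) that by (simp add: mult_le_0_iff)
  ultimately show thesis
    using that by fastforce
qed

lemma deviation_loss_pos:
  fixes \<Delta> gh gl r a d bh :: real
  assumes "0 < \<Delta>" "gl < gh" "0 \<le> r" "0 \<le> bh" "bh < 1" "0 \<le> d" "d \<le> a * (1 - bh)"
    and cap: "gl < 0 \<Longrightarrow> r * a * (- gl) < \<Delta>"
  shows "0 < (1 - bh) * \<Delta> + r * d * (bh * gh + (1 - bh) * gl)"
proof -
  define X where "X = bh * gh + (1 - bh) * gl"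
  have "X - gl = bh * (gh - gl)"
    unfolding X_def by (simp add: algebra_simps)
  moreover have "0 \<le> bh * (gh - gl)"
    using assms(2,4) by simp
  ultimately have "gl \<le> X"
    by linarith
  have "0 < (1 - bh) * \<Delta> + r * d * X"
  proof (cases "0 \<le> gl")
    case True
    then have "0 \<le> r * d * X"
      using \<open>gl \<le> X\<close> assms(3,6) by simp
    moreover have "0 < (1 - bh) * \<Delta>"
      using assms(1,5) by simp
    ultimately show ?thesis
      by linarith
  next
    case False
    have "- ((1 - bh) * (r * a * (- gl))) = r * (a * (1 - bh)) * gl"
      by (simp add: algebra_simps)
    also have "\<dots> \<le> r * d * gl"
      using False assms(3,7) by (simp add: mult_left_mono mult_right_mono_neg)
    also have "\<dots> \<le> r * d * X"
      using \<open>gl \<le> X\<close> assms(3,6) by (simp add: mult_left_mono)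
    finally have "- ((1 - bh) * (r * a * (- gl))) \<le> r * d * X" .
    moreover have "(1 - bh) * (r * a * (- gl)) < (1 - bh) * \<Delta>"
      using False cap assms(5) by (intro mult_strict_left_mono) simp_all
    ultimately show ?thesis
      by linarith
  qed
  then show ?thesis
    unfolding X_def .
qed

theorem lemma1:
  fixes PS :: "signal \<Rightarrow> real \<Rightarrow> real" and phh phl bl bh :: real and n k :: nat
  assumes "phh \<le> 1" and "phl \<le> 1"
    and "phh > phl" and "phl > 0" and "1 - phh > 0"
    and "n \<ge> 2" and "strictly_proper PS"
    and "1 \<le> k" and "int k \<le> kB PS phh phl n"
    and "bl \<ge> 0" and "bh \<ge> 0" and "bh + (1 - phh) / phh * bl \<le> 1"
  shows "u_dev_h PS phh phl n k bl bh \<le> u_truth_h PS phh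
       \<and> (u_dev_h PS phh phl n k bl bh = u_truth_h PS phh \<longrightarrow> (bl, bh) = (0, 1))"
proof -
  let ?\<Delta> = "expected_score PS phh phh - expected_score PS phh phl"
  let ?r = "(real k - 1) / (real n - 1)"
  let ?d = "phh * (1 - bh) - (1 - phh) * bl"
  have k: "int k \<le> kB_l PS phh phl n" "k \<le> n"
    using assms(9) unfolding kB_def by auto
  have u: "u_dev_h PS phh phl n k bl bh = u_truth_h PS phh - ((1 - bh) * ?\<Delta>
      + ?r * ?d * (bh * score_gap PS phh + (1 - bh) * score_gap PS phl))"
    using u_dev_h_eq [OF assms(8) k(2) assms(6)] by simp
  have gain: "0 < ?\<Delta>"
    using assms by (simp add: strictly_properD)
  have gap: "score_gap PS phl < score_gap PS phh"
    using assms by (simp add: strictly_proper_score_gap_less)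
  have phh: "0 < phh" "phh < 1" and r: "0 \<le> ?r" and d: "0 \<le> ?d" "?d \<le> phh * (1 - bh)"
    using assms deviation_slack_nonneg [of phh bh bl] by simp_all
  have cap: "score_gap PS phl < 0 \<Longrightarrow> ?r * phh * (- score_gap PS phl) < ?\<Delta>"
    using kB_l_bound [OF k(1)] assms by (simp add: score_gap_def)
  from feasible_deviation_cases [OF phh assms(10) d(1)] show ?thesis
  proof cases
    case 1
    then show ?thesis
      using deviation_loss_pos [OF gain gap r assms(11) 1 d cap] unfolding u by simp
  next
    case 2
    then show ?thesis
      unfolding u by simp
  qed
qed

end
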